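(* Let $(a_i,b_i)\subseteq[0,1]$ be a countable family of pairwise disjoint, non-empty open intervals and let $f_i$ be $T$-norms. Let $g$ be their ordinal sum. If every $f_i$ satisfies property $A$, then $g$ satisfies property $A$. If every $f_i$ satisfies property $B$, then $g$ satisfies property $B$.
   Context: A $T$-norm is a function $\otimes:[0,1]^2\to[0,1]$ that is commutative, associative, monotonic (i.e. $x\le y$ implies $x\otimes z\le y\otimes z$) and has $1$ as neutral element ($x\otimes 1=x$). The ordinal sum $g$ of the family $(f_i,a_i,b_i)$ is defined by $$g(x,y)=\begin{cases} a_i+(b_i-a_i)\,f_i\!\left(\frac{x-a_i}{b_i-a_i},\frac{y-a_i}{b_i-a_i}\right) & \text{if } (x,y)\in[a_i,b_i]^2,\\ \min(x,y) & \text{otherwise,}\end{cases}$$ and is itself a $T$-norm. A function $f:[0,1]^2\to[0,1]$ satisfies property $A$ if for all $0\le x\le y\le z\le w\le 1$, $w+x\le y+z$ implies $f(x,w)\le f(y,z)$. It satisfies property $B$ (is $2$-increasing) if for all $0\le x\le y\le 1$ and $0\le z\le w\le 1$, $f(x,w)-f(x,z)\le f(y,w)-f(y,z)$. *)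

theory Defs
  imports "HOL-Analysis.Analysis"
begin

text \<open>T-norms as functions on [0,1]^2 (values outside the unit square are irrelevant).\<close>
definition tnorm :: "(real \<Rightarrow> real \<Rightarrow> real) \<Rightarrow> bool" where
  "tnorm f \<longleftrightarrow>
     (\<forall>x\<in>{0..1}. \<forall>y\<in>{0..1}. f x y \<in> {0..1}) \<and>
     (\<forall>x\<in>{0..1}. \<forall>y\<in>{0..1}. f x y = f y x) \<and>
     (\<forall>x\<in>{0..1}. \<forall>y\<in>{0..1}. \<forall>z\<in>{0..1}. f (f x y) z = f x (f y z)) \<and>
     (\<forall>x\<in>{0..1}. \<forall>y\<in>{0..1}. \<forall>z\<in>{0..1}. x \<le> y \<longrightarrow> f x z \<le> f y z) \<and>
     (\<forall>x\<in>{0..1}. f x 1 = x)"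

text \<open>If (x,y) lies in several squares
  (only possible at a shared endpoint), all candidate values coincide for T-norms,
  so the choice is immaterial.\<close>
definition ordinal_sum ::
  "'i set \<Rightarrow> ('i \<Rightarrow> real \<Rightarrow> real \<Rightarrow> real) \<Rightarrow> ('i \<Rightarrow> real) \<Rightarrow> ('i \<Rightarrow> real) \<Rightarrow> real \<Rightarrow> real \<Rightarrow> real" where
  "ordinal_sum I f a b x y =
     (if \<exists>i\<in>I. x \<in> {a i..b i} \<and> y \<in> {a i..b i}
      then (let i = (SOME i. i \<in> I \<and> x \<in> {a i..b i} \<and> y \<in> {a i..b i})
            in a i + (b i - a i) * f i ((x - a i) / (b i - a i)) ((y - a i) / (b i - a i)))
      else min x y)"

definition propA :: "(real \<Rightarrow> real \<Rightarrow> real) \<Rightarrow> bool" where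
  "propA f \<longleftrightarrow> (\<forall>x y z w. 0 \<le> x \<and> x \<le> y \<and> y \<le> z \<and> z \<le> w \<and> w \<le> 1 \<and> w + x \<le> y + z
                    \<longrightarrow> f x w \<le> f y z)"

definition propB :: "(real \<Rightarrow> real \<Rightarrow> real) \<Rightarrow> bool" where
  "propB f \<longleftrightarrow> (\<forall>x y z w. 0 \<le> x \<and> x \<le> y \<and> y \<le> 1 \<and> 0 \<le> z \<and> z \<le> w \<and> w \<le> 1
                    \<longrightarrow> f x w - f x z \<le> f y w - f y z)"

end

theory Submission
  imports Defs
begin

text \<open>On each square [a i, b i] \<times> [a i, b i] the ordinal sum g is an affinely rescaled
  copy of f i, and both properties survive the affine change of variables; off the open squares
  g is min, and everywhere g u v \<le> min u v.
  For property A, either (y, z) lies in no square and g x w \<le> x \<le> min y z = g y z, or it lies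
  in a square [a i, b i] \<times> [a i, b i]; if w > b i, then g x w \<le> x \<le> y + z - b i = g (y + z - b i) (b i)
  reduces the claim to property A of f i.
  For property B, u \<mapsto> g u w - g u z is monotone on every [a i, b i] (property B of f i, with z
  and w clamped into the interval) and coincides with the monotone min u w - min u z at points
  outside all open intervals. Since the intervals do not overlap, these pieces glue to a monotone
  function on the whole line, however many intervals there are.\<close>

lemma mono_glue_intervals:
  fixes h :: "real \<Rightarrow> real" and a b :: "'i \<Rightarrow> real"
  assumes nonempty: "\<And>i. i \<in> K \<Longrightarrow> a i < b i"
    and separated: "\<And>i j. i \<in> K \<Longrightarrow> j \<in> K \<Longrightarrow> i \<noteq> j \<Longrightarrow> b i \<le> a j \<or> b j \<le> a i"
    and inside: "\<And>i. i \<in> K \<Longrightarrow> mono_on {a i..b i} h"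
    and outside: "\<And>s t. s \<le> t \<Longrightarrow> \<forall>k\<in>K. s \<notin> {a k<..<b k} \<Longrightarrow> \<forall>k\<in>K. t \<notin> {a k<..<b k}
      \<Longrightarrow> h s \<le> h t"
  shows "mono h"
proof (rule monoI)
  have endpoints_outside: "\<forall>k\<in>K. a i \<notin> {a k<..<b k} \<and> b i \<notin> {a k<..<b k}" if "i \<in> K" for i
    using separated[OF that] nonempty[OF that] nonempty by fastforce
  have into_outside: "h x \<le> h y" if "x \<le> y" "\<forall>k\<in>K. y \<notin> {a k<..<b k}" for x y
  proof (cases "\<exists>i\<in>K. x \<in> {a i<..<b i}")
    case True
    then obtain i where i: "i \<in> K" "x \<in> {a i<..<b i}" by blast
    then have "b i \<le> y" using that by force
    have "h x \<le> h (b i)" using inside[OF i(1)] i(2) by (auto intro: mono_onD)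
    also have "\<dots> \<le> h y" using outside[OF \<open>b i \<le> y\<close>] endpoints_outside[OF i(1)] that(2) by blast
    finally show ?thesis .
  qed (use outside that in blast)
  fix x y :: real
  assume "x \<le> y"
  show "h x \<le> h y"
  proof (cases "\<exists>j\<in>K. y \<in> {a j<..<b j}")
    case True
    then obtain j where j: "j \<in> K" "y \<in> {a j<..<b j}" by blast
    show ?thesis
    proof (cases "a j \<le> x")
      case True
      then show ?thesis using inside[OF j(1)] j(2) \<open>x \<le> y\<close> by (auto intro: mono_onD)
    next
      case False
      then have "h x \<le> h (a j)" using into_outside endpoints_outside[OF j(1)] by simp
      also have "\<dots> \<le> h y" using inside[OF j(1)] j(2) nonempty[OF j(1)] by (auto intro: mono_onD)
      finally show ?thesis .
    qed
  qed (use into_outside \<open>x \<le> y\<close> in blast)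
qed

lemma
  assumes "tnorm f"
  shows tnorm_commute: "x \<in> {0..1} \<Longrightarrow> y \<in> {0..1} \<Longrightarrow> f x y = f y x"
    and tnorm_mono_left: "x \<in> {0..1} \<Longrightarrow> y \<in> {0..1} \<Longrightarrow> z \<in> {0..1} \<Longrightarrow> x \<le> y \<Longrightarrow> f x z \<le> f y z"
    and tnorm_right_neutral: "x \<in> {0..1} \<Longrightarrow> f x 1 = x"
    and tnorm_nonneg: "x \<in> {0..1} \<Longrightarrow> y \<in> {0..1} \<Longrightarrow> 0 \<le> f x y"
  using assms unfolding tnorm_def by (auto simp only: atLeastAtMost_iff)

lemma tnorm_le_left: "tnorm f \<Longrightarrow> x \<in> {0..1} \<Longrightarrow> y \<in> {0..1} \<Longrightarrow> f x y \<le> x"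
  using tnorm_commute[of f x y] tnorm_mono_left[of f y 1 x] tnorm_commute[of f 1 x]
    tnorm_right_neutral[of f x] by auto

lemma tnorm_right_zero: "tnorm f \<Longrightarrow> x \<in> {0..1} \<Longrightarrow> f x 0 = 0"
  using tnorm_le_left[of f 0 x] tnorm_commute[of f x 0] tnorm_nonneg[of f x 0] by auto

locale ordinal_sum_family =
  fixes I :: "'i set" and f :: "'i \<Rightarrow> real \<Rightarrow> real \<Rightarrow> real" and a b :: "'i \<Rightarrow> real"
  assumes nonempty: "\<And>i. i \<in> I \<Longrightarrow> a i < b i"
    and disjoint: "\<And>i j. i \<in> I \<Longrightarrow> j \<in> I \<Longrightarrow> i \<noteq> j \<Longrightarrow> {a i<..<b i} \<inter> {a j<..<b j} = {}"
    and tnorm: "\<And>i. i \<in> I \<Longrightarrow> tnorm (f i)"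
begin

abbreviation g :: "real \<Rightarrow> real \<Rightarrow> real" where
  "g \<equiv> ordinal_sum I f a b"

definition rescale :: "'i \<Rightarrow> real \<Rightarrow> real" where
  "rescale i u = (u - a i) / (b i - a i)"

definition summand :: "'i \<Rightarrow> real \<Rightarrow> real \<Rightarrow> real" where
  "summand i u v = a i + (b i - a i) * f i (rescale i u) (rescale i v)"

lemma rescale_in_unit: "i \<in> I \<Longrightarrow> u \<in> {a i..b i} \<Longrightarrow> rescale i u \<in> {0..1}"
  using nonempty[of i] by (auto simp: rescale_def divide_le_eq_1)

lemma rescale_mono: "i \<in> I \<Longrightarrow> u \<le> v \<Longrightarrow> rescale i u \<le> rescale i v"
  using nonempty[of i] unfolding rescale_def by (auto intro: divide_right_mono)

lemma rescale_add_mono: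
  "i \<in> I \<Longrightarrow> u + v \<le> u' + v' \<Longrightarrow> rescale i u + rescale i v \<le> rescale i u' + rescale i v'"
  using nonempty[of i] unfolding rescale_def add_divide_distrib[symmetric]
  by (auto intro: divide_right_mono)

lemma intervals_separated:
  assumes "i \<in> I" "j \<in> I" "i \<noteq> j"
  shows "b i \<le> a j \<or> b j \<le> a i"
proof (rule ccontr)
  assume overlap: "\<not> ?thesis"
  define m where "m = (max (a i) (a j) + min (b i) (b j)) / 2"
  have "m \<in> {a i<..<b i} \<inter> {a j<..<b j}"
    using overlap nonempty[OF assms(1)] nonempty[OF assms(2)] unfolding m_def by auto
  then show False using disjoint[OF assms] by auto
qed

lemma summand_top:
  assumes "i \<in> I" "u \<in> {a i..b i}"
  shows "summand i u (b i) = u"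
proof -
  have "f i (rescale i u) (rescale i (b i)) = rescale i u"
    using nonempty[OF assms(1)] tnorm_right_neutral[OF tnorm rescale_in_unit] assms
    by (simp add: rescale_def)
  then show ?thesis using nonempty[OF assms(1)] by (simp add: summand_def rescale_def)
qed

lemma summand_bottom: "i \<in> I \<Longrightarrow> u \<in> {a i..b i} \<Longrightarrow> summand i u (a i) = a i"
  using tnorm_right_zero[OF tnorm rescale_in_unit] by (simp add: summand_def rescale_def)

lemma summand_commute:
  "i \<in> I \<Longrightarrow> u \<in> {a i..b i} \<Longrightarrow> v \<in> {a i..b i} \<Longrightarrow> summand i u v = summand i v u"
  using tnorm_commute[OF tnorm rescale_in_unit rescale_in_unit] by (simp add: summand_def)

lemma summand_ge_bottom:
  "i \<in> I \<Longrightarrow> u \<in> {a i..b i} \<Longrightarrow> v \<in> {a i..b i} \<Longrightarrow> a i \<le> summand i u v"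
  using tnorm_nonneg[OF tnorm rescale_in_unit rescale_in_unit] nonempty[of i]
  by (simp add: summand_def)

lemma summand_le_left:
  assumes "i \<in> I" "u \<in> {a i..b i}" "v \<in> {a i..b i}"
  shows "summand i u v \<le> u"
proof -
  have "summand i u v \<le> a i + (b i - a i) * rescale i u"
    unfolding summand_def using nonempty[of i] assms
    by (auto intro: mult_left_mono tnorm_le_left[OF tnorm rescale_in_unit rescale_in_unit])
  also have "\<dots> = u" using nonempty[of i] assms by (simp add: rescale_def)
  finally show ?thesis .
qed

lemma summand_at_endpoint:
  assumes "i \<in> I" "u \<in> {a i..b i}" "v \<in> {a i..b i}"
    and "u \<in> {a i, b i} \<or> v \<in> {a i, b i}"
  shows "summand i u v = min u v"
  using assms summand_top[OF assms(1)] summand_bottom[OF assms(1)] summand_commute[OF assms(1-3)]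
  by auto

lemma summand_propA:
  assumes "i \<in> I" "propA (f i)" "u1 \<le> u2" "u2 \<le> u3" "u3 \<le> u4"
    and "u1 \<in> {a i..b i}" "u4 \<in> {a i..b i}" "u4 + u1 \<le> u2 + u3"
  shows "summand i u1 u4 \<le> summand i u2 u3"
proof -
  have "f i (rescale i u1) (rescale i u4) \<le> f i (rescale i u2) (rescale i u3)"
    using assms(2) unfolding propA_def
    using assms rescale_in_unit[OF assms(1), of u1] rescale_in_unit[OF assms(1), of u4]
      rescale_mono[OF assms(1)] rescale_add_mono[OF assms(1) assms(8)] by auto
  then show ?thesis
    using nonempty[OF assms(1)] unfolding summand_def by (auto intro: mult_left_mono)
qed

lemma summand_propB:
  assumes "i \<in> I" "propB (f i)" "z \<le> w" "z \<in> {a i..b i}" "w \<in> {a i..b i}"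
  shows "mono_on {a i..b i} (\<lambda>u. summand i u w - summand i u z)"
proof (rule mono_onI)
  fix u u' assume u: "u \<in> {a i..b i}" "u' \<in> {a i..b i}" "u \<le> u'"
  have "f i (rescale i u) (rescale i w) - f i (rescale i u) (rescale i z)
      \<le> f i (rescale i u') (rescale i w) - f i (rescale i u') (rescale i z)"
    using assms(2) unfolding propB_def
    using assms u rescale_in_unit[OF assms(1)] rescale_mono[OF assms(1)] by auto
  then have "(b i - a i) * (f i (rescale i u) (rescale i w) - f i (rescale i u) (rescale i z))
      \<le> (b i - a i) * (f i (rescale i u') (rescale i w) - f i (rescale i u') (rescale i z))"
    using nonempty[OF assms(1)] by (intro mult_left_mono) auto
  then show "summand i u w - summand i u z \<le> summand i u' w - summand i u' z"
    by (simp add: summand_def algebra_simps)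
qed

lemma ordinal_sum_eq_summand:
  assumes "i \<in> I" "u \<in> {a i..b i}" "v \<in> {a i..b i}"
  shows "g u v = summand i u v"
proof -
  let ?P = "\<lambda>i. i \<in> I \<and> u \<in> {a i..b i} \<and> v \<in> {a i..b i}"
  define j where "j = (SOME i. ?P i)"
  have j: "j \<in> I" "u \<in> {a j..b j}" "v \<in> {a j..b j}"
    using someI[of ?P i] assms unfolding j_def by auto
  have "g u v = summand j u v"
    using assms unfolding ordinal_sum_def summand_def rescale_def j_def Let_def by auto
  also have "\<dots> = summand i u v"
  proof (cases "j = i")
    case False
    then have "u \<in> {a i, b i} \<and> v \<in> {a i, b i} \<and> u \<in> {a j, b j} \<and> v \<in> {a j, b j}"
      using intervals_separated[OF assms(1) j(1)] assms j by auto
    then show ?thesis using summand_at_endpoint assms j by metis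
  qed simp
  finally show ?thesis .
qed

lemma ordinal_sum_eq_min:
  assumes "\<not> (\<exists>i\<in>I. u \<in> {a i<..<b i} \<and> v \<in> {a i<..<b i})"
  shows "g u v = min u v"
proof (cases "\<exists>i\<in>I. u \<in> {a i..b i} \<and> v \<in> {a i..b i}")
  case True
  then obtain i where i: "i \<in> I" "u \<in> {a i..b i}" "v \<in> {a i..b i}" by blast
  then have "u \<in> {a i, b i} \<or> v \<in> {a i, b i}" using assms by auto
  then show ?thesis using ordinal_sum_eq_summand[OF i] summand_at_endpoint[OF i] by simp
next
  case False
  then show ?thesis by (simp only: ordinal_sum_def if_False)
qed

lemma ordinal_sum_le_min: "g u v \<le> min u v"
proof (cases "\<exists>i\<in>I. u \<in> {a i..b i} \<and> v \<in> {a i..b i}")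
  case True
  then obtain i where i: "i \<in> I" "u \<in> {a i..b i}" "v \<in> {a i..b i}" by blast
  then show ?thesis
    using ordinal_sum_eq_summand[OF i] summand_le_left[OF i] summand_le_left[OF i(1,3,2)]
      summand_commute[OF i] by simp
next
  case False
  then show ?thesis by (simp only: ordinal_sum_def if_False order.refl)
qed

lemma not_in_other_interval:
  "i \<in> I \<Longrightarrow> j \<in> I \<Longrightarrow> i \<noteq> j \<Longrightarrow> u \<in> {a i..b i} \<Longrightarrow> u \<notin> {a j<..<b j}"
  using intervals_separated[of i j] by auto

lemma ordinal_sum_on_strip:
  assumes "i \<in> I" "u \<in> {a i..b i}"
  shows "g u v = summand i u (max (a i) (min v (b i))) + min 0 (v - a i)"
proof -
  have off_diagonal: "g u v = min u v" if "v \<notin> {a i<..<b i}"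
    using ordinal_sum_eq_min not_in_other_interval[OF assms(1) _ _ assms(2)] that by blast
  consider "v < a i" | "b i < v" | "v \<in> {a i..b i}" by force
  then show ?thesis
  proof cases
    case 1
    then show ?thesis using off_diagonal summand_bottom[OF assms] assms by auto
  next
    case 2
    then show ?thesis using off_diagonal summand_top[OF assms] assms nonempty[OF assms(1)] by auto
  next
    case 3
    then show ?thesis using ordinal_sum_eq_summand[OF assms] by simp
  qed
qed

lemma ordinal_sum_diff_mono_on_strip:
  assumes "i \<in> I" "propB (f i)" "z \<le> w"
  shows "mono_on {a i..b i} (\<lambda>u. g u w - g u z)"
proof (rule mono_onI)
  define clamp where "clamp v = max (a i) (min v (b i))" for v
  have "mono_on {a i..b i} (\<lambda>u. summand i u (clamp w) - summand i u (clamp z))"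
    using summand_propB[OF assms(1,2)] assms(3) nonempty[OF assms(1)] unfolding clamp_def by simp
  moreover fix u u' assume "u \<in> {a i..b i}" "u' \<in> {a i..b i}" "u \<le> u'"
  ultimately show "g u w - g u z \<le> g u' w - g u' z"
    using ordinal_sum_on_strip[OF assms(1)] mono_onD unfolding clamp_def by fastforce
qed

theorem propB_ordinal_sum:
  assumes "\<forall>i\<in>I. propB (f i)"
  shows "propB g"
  unfolding propB_def
proof (intro allI impI)
  fix x y z w :: real
  assume xyzw: "0 \<le> x \<and> x \<le> y \<and> y \<le> 1 \<and> 0 \<le> z \<and> z \<le> w \<and> w \<le> 1"
  have "mono (\<lambda>u. g u w - g u z)"
  proof (rule mono_glue_intervals[of I a b])
    fix s t :: real
    assume "s \<le> t" "\<forall>k\<in>I. s \<notin> {a k<..<b k}" "\<forall>k\<in>I. t \<notin> {a k<..<b k}"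
    then have "g s v = min s v" "g t v = min t v" for v
      by (meson ordinal_sum_eq_min)+
    then show "g s w - g s z \<le> g t w - g t z"
      using \<open>s \<le> t\<close> xyzw by (auto simp: min_def)
  qed (use nonempty intervals_separated ordinal_sum_diff_mono_on_strip assms xyzw in auto)
  then show "g x w - g x z \<le> g y w - g y z" using xyzw by (auto dest: monoD)
qed

theorem propA_ordinal_sum:
  assumes "\<forall>i\<in>I. propA (f i)"
  shows "propA g"
  unfolding propA_def
proof (intro allI impI)
  fix x y z w :: real
  assume xyzw: "0 \<le> x \<and> x \<le> y \<and> y \<le> z \<and> z \<le> w \<and> w \<le> 1 \<and> w + x \<le> y + z"
  have gxw: "g x w \<le> x" using ordinal_sum_le_min[of x w] by simp
  show "g x w \<le> g y z"
  proof (cases "\<exists>i\<in>I. y \<in> {a i..b i} \<and> z \<in> {a i..b i}")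
    case False
    then have "g y z = min y z" by (intro ordinal_sum_eq_min) auto
    then show ?thesis using gxw xyzw by simp
  next
    case True
    then obtain i where i: "i \<in> I" "y \<in> {a i..b i}" "z \<in> {a i..b i}" by blast
    have gyz: "g y z = summand i y z" using ordinal_sum_eq_summand[OF i] .
    consider "x \<le> a i" | "a i < x" "w \<le> b i" | "a i < x" "b i < w" by force
    then show ?thesis
    proof cases
      case 1
      then show ?thesis using gxw gyz summand_ge_bottom[OF i] by simp
    next
      case 2
      then have "g x w = summand i x w" using ordinal_sum_eq_summand[OF i(1)] i xyzw by simp
      also have "\<dots> \<le> summand i y z" using summand_propA[OF i(1)] assms i 2 xyzw by auto
      finally show ?thesis using gyz by simp
    next
      case 3
      define x' where "x' = y + z - b i"
      have "g x w \<le> x'" using gxw xyzw 3 unfolding x'_def by simp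
      also have "\<dots> = summand i x' (b i)" using summand_top[OF i(1)] i xyzw 3 unfolding x'_def by simp
      also have "\<dots> \<le> summand i y z"
        using summand_propA[OF i(1), of x' y z "b i"] assms i xyzw 3 unfolding x'_def by auto
      finally show ?thesis using gyz by simp
    qed
  qed
qed

end

theorem lemma1:
  fixes I :: "'i set" and f :: "'i \<Rightarrow> real \<Rightarrow> real \<Rightarrow> real" and a b :: "'i \<Rightarrow> real"
  assumes "countable I"
    and "\<And>i. i \<in> I \<Longrightarrow> 0 \<le> a i \<and> a i < b i \<and> b i \<le> 1"
    and "\<And>i j. i \<in> I \<Longrightarrow> j \<in> I \<Longrightarrow> i \<noteq> j \<Longrightarrow> {a i<..<b i} \<inter> {a j<..<b j} = {}"
    and "\<And>i. i \<in> I \<Longrightarrow> tnorm (f i)"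
  shows "((\<forall>i\<in>I. propA (f i)) \<longrightarrow> propA (ordinal_sum I f a b)) \<and>
         ((\<forall>i\<in>I. propB (f i)) \<longrightarrow> propB (ordinal_sum I f a b))"
proof -
  interpret ordinal_sum_family I f a b
    using assms(2-4) by unfold_locales auto
  show ?thesis using propA_ordinal_sum propB_ordinal_sum by blast
qed

end
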